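(* Let $s_1,s_2$ be prime powers and for $j=1,2$ let $D_j$ be a difference matrix $D(b_j,c_j,s_j)$ over the additive group of $\mathrm{GF}(s_j)$. Let $c_0$ be an integer with $1\le c_0\le\min(c_1,c_2)$, and partition $D_j=[D_{j0},D_{j1}]$ where $D_{j0}$ consists of the first $c_0$ columns. Write $\alpha_{i,k}$ for the $(i,k)$ entry of $D_1$ and $\beta_{j,k}$ for the $(j,k)$ entry of $D_2$. Let $D_0$ be the $b_1b_2\times c_0$ matrix with entries in $\mathrm{GF}(s_1)\times\mathrm{GF}(s_2)$ whose entry in row $(i-1)b_2+j$ and column $k$ is $(\alpha_{i,k},\beta_{j,k})$, for $1\le i\le b_1$, $1\le j\le b_2$, $1\le k\le c_0$. Let $D_{11}^*$ be the $b_1b_2\times(c_1-c_0)$ matrix whose row $(i-1)b_2+j$ is the $i$th row of $D_{11}$, and $D_{21}^*$ the $b_1b_2\times(c_2-c_0)$ matrix whose row $(i-1)b_2+j$ is the $j$th row of $D_{21}$. Then: (i) $D_0$ is a difference matrix $D(b_1b_2,c_0,s_1s_2)$ over the group $\mathrm{GF}(s_1)\times\mathrm{GF}(s_2)$ (addition componentwise); (ii) for $j=1,2$, $D_{j1}^*$ is a difference matrix $D(b_1b_2,c_j-c_0,s_j)$; (iii) for $j=1,2$, $[\sigma_j(D_0),D_{j1}^*]$ is a difference matrix $D(b_1b_2,c_j,s_j)$.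
   Context: A difference matrix $D(b,c,g)$ over an abelian group of order $g$ is a $b\times c$ array with entries in the group such that for any two distinct columns their entrywise difference contains every group element equally often. For a matrix whose entries are pairs, $\sigma_j$ denotes taking the $j$th component of every entry. *)

theory Defs
  imports Main "HOL-Library.Product_Plus"
begin

text \<open>Matrices are functions nat => nat => 'g; a b x c matrix uses the rows 0..<b and
columns 0..<c (0-based indexing). The abelian group is the type 'g (order CARD('g)).\<close>

definition diff_matrix :: "nat \<Rightarrow> nat \<Rightarrow> (nat \<Rightarrow> nat \<Rightarrow> 'g::{ab_group_add,finite}) \<Rightarrow> bool" where
  "diff_matrix b c D \<longleftrightarrow>
     (\<forall>k1<c. \<forall>k2<c. k1 \<noteq> k2 \<longrightarrow>
        (\<forall>x y :: 'g. card {i. i < b \<and> D i k1 - D i k2 = x} = card {i. i < b \<and> D i k1 - D i k2 = y}))"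

definition hcat :: "nat \<Rightarrow> (nat \<Rightarrow> nat \<Rightarrow> 'a) \<Rightarrow> (nat \<Rightarrow> nat \<Rightarrow> 'a) \<Rightarrow> nat \<Rightarrow> nat \<Rightarrow> 'a" where
  "hcat c A B = (\<lambda>r k. if k < c then A r k else B r (k - c))"

definition sigma1 :: "(nat \<Rightarrow> nat \<Rightarrow> 'a \<times> 'b) \<Rightarrow> nat \<Rightarrow> nat \<Rightarrow> 'a" where
  "sigma1 M = (\<lambda>r k. fst (M r k))"

definition sigma2 :: "(nat \<Rightarrow> nat \<Rightarrow> 'a \<times> 'b) \<Rightarrow> nat \<Rightarrow> nat \<Rightarrow> 'b" where
  "sigma2 M = (\<lambda>r k. snd (M r k))"

end

theory Submission
  imports Defs
begin

text \<open>Index the rows of the big matrix by pairs \<open>(i, j)\<close> via \<open>r = i * b2 + j\<close>. A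
difference of two columns of \<open>D0\<close> then equals \<open>(x, y)\<close> exactly on the product of the rows
of \<open>D1\<close> where the difference is \<open>x\<close> with the rows of \<open>D2\<close> where it is \<open>y\<close>, so its number
of occurrences is a product of two counts that do not depend on \<open>x\<close> resp. \<open>y\<close>. Part (iii) is
just the observation that \<open>[\<sigma>\<^sub>1(D0), D11*]\<close> is \<open>D1\<close> with each row repeated \<open>b2\<close> times, and
similarly for \<open>D2\<close> with the whole matrix repeated \<open>b1\<close> times; (ii) then follows by
dropping the first \<open>c0\<close> columns.\<close>

lemma diff_matrixI:
  assumes "\<And>k1 k2 x y. k1 < c \<Longrightarrow> k2 < c \<Longrightarrow> k1 \<noteq> k2 \<Longrightarrow>
     card {i. i < b \<and> D i k1 - D i k2 = x} = card {i. i < b \<and> D i k1 - D i k2 = y}"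
  shows "diff_matrix b c D"
  using assms unfolding diff_matrix_def by blast

lemma diff_matrixD:
  assumes "diff_matrix b c D" and "k1 < c" and "k2 < c" and "k1 \<noteq> k2"
  shows "card {i. i < b \<and> D i k1 - D i k2 = x} = card {i. i < b \<and> D i k1 - D i k2 = y}"
  using assms unfolding diff_matrix_def by blast

lemma diff_matrix_take_columns:
  assumes "diff_matrix b c D" and "c' \<le> c"
  shows "diff_matrix b c' D"
  using assms by (auto intro!: diff_matrixI elim!: diff_matrixD)

lemma diff_matrix_drop_columns:
  assumes "diff_matrix b c D"
  shows "diff_matrix b (c - c0) (\<lambda>r k. D r (c0 + k))"
  using assms by (auto intro!: diff_matrixI elim!: diff_matrixD)

lemma card_rows_div_mod:
  fixes A B :: "nat \<Rightarrow> bool"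
  shows "card {r. r < b1 * b2 \<and> A (r div b2) \<and> B (r mod b2)}
       = card {i. i < b1 \<and> A i} * card {j. j < b2 \<and> B j}"
proof -
  let ?pair = "\<lambda>(i, j). i * b2 + j"
  let ?I = "{i. i < b1 \<and> A i}" and ?J = "{j. j < b2 \<and> B j}"
  have image: "{r. r < b1 * b2 \<and> A (r div b2) \<and> B (r mod b2)} = ?pair ` (?I \<times> ?J)"
  proof (rule set_eqI, rule iffI)
    fix r assume "r \<in> {r. r < b1 * b2 \<and> A (r div b2) \<and> B (r mod b2)}"
    then have r: "r < b1 * b2" "A (r div b2)" "B (r mod b2)" by auto
    then have "b2 > 0" by (cases b2) auto
    with r have "r div b2 < b1" "r mod b2 < b2"
      by (simp_all add: less_mult_imp_div_less)
    with r show "r \<in> ?pair ` (?I \<times> ?J)"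
      by (intro image_eqI[of _ _ "(r div b2, r mod b2)"]) auto
  next
    fix r assume "r \<in> ?pair ` (?I \<times> ?J)"
    then obtain i j where r: "r = i * b2 + j" "i < b1" "A i" "j < b2" "B j" by auto
    have "i * b2 + j < (i + 1) * b2" using r by simp
    also have "\<dots> \<le> b1 * b2" using r by (intro mult_right_mono) auto
    finally show "r \<in> {r. r < b1 * b2 \<and> A (r div b2) \<and> B (r mod b2)}" using r by auto
  qed
  have inj: "inj_on ?pair (?I \<times> ?J)"
  proof (rule inj_onI, clarsimp)
    fix i j i' j' assume "j < b2" "j' < b2" "i * b2 + j = i' * b2 + j'"
    then have "(i * b2 + j) div b2 = (i' * b2 + j') div b2"
      and "(i * b2 + j) mod b2 = (i' * b2 + j') mod b2" by auto
    with \<open>j < b2\<close> \<open>j' < b2\<close> show "i = i' \<and> j = j'" by auto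
  qed
  show ?thesis unfolding image card_image[OF inj] card_cartesian_product ..
qed

lemma diff_matrix_product:
  fixes D1 :: "nat \<Rightarrow> nat \<Rightarrow> 'a::{ab_group_add,finite}"
    and D2 :: "nat \<Rightarrow> nat \<Rightarrow> 'b::{ab_group_add,finite}"
  assumes "diff_matrix b1 c D1" and "diff_matrix b2 c D2"
  shows "diff_matrix (b1 * b2) c (\<lambda>r k. (D1 (r div b2) k, D2 (r mod b2) k))"
proof (rule diff_matrixI)
  fix k1 k2 and x y :: "'a \<times> 'b"
  assume k: "k1 < c" "k2 < c" "k1 \<noteq> k2"
  let ?D = "\<lambda>r k. (D1 (r div b2) k, D2 (r mod b2) k)"
  have count: "card {r. r < b1 * b2 \<and> ?D r k1 - ?D r k2 = z}
      = card {i. i < b1 \<and> D1 i k1 - D1 i k2 = fst z}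
        * card {j. j < b2 \<and> D2 j k1 - D2 j k2 = snd z}" for z :: "'a \<times> 'b"
  proof -
    have "{r. r < b1 * b2 \<and> ?D r k1 - ?D r k2 = z}
        = {r. r < b1 * b2 \<and> D1 (r div b2) k1 - D1 (r div b2) k2 = fst z
                         \<and> D2 (r mod b2) k1 - D2 (r mod b2) k2 = snd z}"
      by (cases z) auto
    then show ?thesis using card_rows_div_mod by simp
  qed
  show "card {r. r < b1 * b2 \<and> ?D r k1 - ?D r k2 = x}
      = card {r. r < b1 * b2 \<and> ?D r k1 - ?D r k2 = y}"
    unfolding count
    using diff_matrixD[OF assms(1) k, of "fst x" "fst y"]
      diff_matrixD[OF assms(2) k, of "snd x" "snd y"] by simp
qed

lemma diff_matrix_repeat_rows:
  assumes "diff_matrix b c D"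
  shows "diff_matrix (b * m) c (\<lambda>r k. D (r div m) k)"
proof (rule diff_matrixI)
  fix k1 k2 x y assume k: "k1 < c" "k2 < c" "k1 \<noteq> k2"
  have "card {r. r < b * m \<and> D (r div m) k1 - D (r div m) k2 = z}
      = card {i. i < b \<and> D i k1 - D i k2 = z} * m" for z
    using card_rows_div_mod[of b m "\<lambda>i. D i k1 - D i k2 = z" "\<lambda>_. True"] by simp
  then show "card {r. r < b * m \<and> D (r div m) k1 - D (r div m) k2 = x}
      = card {r. r < b * m \<and> D (r div m) k1 - D (r div m) k2 = y}"
    using diff_matrixD[OF assms k] by simp
qed

lemma diff_matrix_repeat_matrix:
  assumes "diff_matrix b c D"
  shows "diff_matrix (m * b) c (\<lambda>r k. D (r mod b) k)"
proof (rule diff_matrixI)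
  fix k1 k2 x y assume k: "k1 < c" "k2 < c" "k1 \<noteq> k2"
  have "card {r. r < m * b \<and> D (r mod b) k1 - D (r mod b) k2 = z}
      = m * card {j. j < b \<and> D j k1 - D j k2 = z}" for z
    using card_rows_div_mod[of m b "\<lambda>_. True" "\<lambda>j. D j k1 - D j k2 = z"] by simp
  then show "card {r. r < m * b \<and> D (r mod b) k1 - D (r mod b) k2 = x}
      = card {r. r < m * b \<and> D (r mod b) k1 - D (r mod b) k2 = y}"
    using diff_matrixD[OF assms k] by simp
qed

theorem lemma7:
  fixes D1 :: "nat \<Rightarrow> nat \<Rightarrow> 'a::{field,finite}"
    and D2 :: "nat \<Rightarrow> nat \<Rightarrow> 'b::{field,finite}"
    and b1 c1 b2 c2 c0 :: nat
  assumes "diff_matrix b1 c1 D1" and "diff_matrix b2 c2 D2"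
    and "1 \<le> c0" and "c0 \<le> min c1 c2"
  defines "D0 \<equiv> (\<lambda>r k. (D1 (r div b2) k, D2 (r mod b2) k))"
    and "D11s \<equiv> (\<lambda>r k. D1 (r div b2) (c0 + k))"
    and "D21s \<equiv> (\<lambda>r k. D2 (r mod b2) (c0 + k))"
  shows "diff_matrix (b1 * b2) c0 D0
         \<and> diff_matrix (b1 * b2) (c1 - c0) D11s
         \<and> diff_matrix (b1 * b2) (c2 - c0) D21s
         \<and> diff_matrix (b1 * b2) c1 (hcat c0 (sigma1 D0) D11s)
         \<and> diff_matrix (b1 * b2) c2 (hcat c0 (sigma2 D0) D21s)"
proof -
  have first: "hcat c0 (sigma1 D0) D11s = (\<lambda>r k. D1 (r div b2) k)"
    and second: "hcat c0 (sigma2 D0) D21s = (\<lambda>r k. D2 (r mod b2) k)"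
    unfolding hcat_def sigma1_def sigma2_def D0_def D11s_def D21s_def by (auto intro!: ext)
  have rep1: "diff_matrix (b1 * b2) c1 (\<lambda>r k. D1 (r div b2) k)"
    using diff_matrix_repeat_rows[OF assms(1)] .
  have rep2: "diff_matrix (b1 * b2) c2 (\<lambda>r k. D2 (r mod b2) k)"
    using diff_matrix_repeat_matrix[OF assms(2)] .
  have "diff_matrix (b1 * b2) c0 D0"
    unfolding D0_def using assms(4)
    by (intro diff_matrix_product diff_matrix_take_columns[OF assms(1)]
        diff_matrix_take_columns[OF assms(2)]) auto
  moreover have "diff_matrix (b1 * b2) (c1 - c0) D11s"
    unfolding D11s_def using diff_matrix_drop_columns[OF rep1] .
  moreover have "diff_matrix (b1 * b2) (c2 - c0) D21s"
    unfolding D21s_def using diff_matrix_drop_columns[OF rep2] .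
  ultimately show ?thesis using rep1 rep2 unfolding first second by blast
qed

end
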